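(* Let $\frac12<\beta<\frac54$ and $\alpha+\beta=\frac54$. Then for any $r>0$ there exists a constant $C>0$ such that for all $v\in V^{2\beta}\cap V^{r+\beta}$, \[ |\langle B(\Lambda^{-2\alpha}v,v),\Lambda^{2r}v\rangle|\le C\|v\|_{V^{2\beta}}\|v\|_{V^{r+\beta}}\|v\|_{V^r}. \]
   Context: On the torus $\mathbb T=[0,2\pi]^3$, for $s\in\mathbb R$, $V^s$ is the space of real periodic vector fields $w=\sum_{k\in\mathbb Z^3\setminus\{0\}}w_ke^{ik\cdot x}$, $w_k\in\mathbb C^3$, $w_{-k}=\overline{w_k}$, $w_k\cdot k=0$ (divergence free, zero mean), with $\|w\|_{V^s}^2=\sum_k|w_k|^2|k|^{2s}<\infty$. $\Lambda^s$ is the Fourier multiplier by $|k|^s$. $B(u,v)=\Pi((u\cdot\nabla)v)$ with $\Pi$ the Leray projection, and $\langle B(u,v),w\rangle=\int_{\mathbb T}((u\cdot\nabla)v)\cdot w\,dx$ (for $w$ divergence free) denotes the $L^2$ pairing. *)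

theory Defs
  imports "HOL-Analysis.Analysis"
begin

text \<open>Periodic vector fields on the torus [0,2pi]^3 are represented by their Fourier
coefficients: a field w is the function k \<mapsto> w_k from the lattice Z^3 (type int^3)
to C^3 (type complex^3), standing for the series sum_k w_k e^{i k.x}.\<close>

type_synonym lattice = "int ^ 3"
type_synonym coef = "complex ^ 3"
type_synonym field = "lattice \<Rightarrow> coef"

definition knorm :: "lattice \<Rightarrow> real" where
  "knorm k = sqrt (\<Sum>i\<in>UNIV. (real_of_int (k $ i))^2)"

definition cdot :: "coef \<Rightarrow> coef \<Rightarrow> complex" where
  "cdot a b = (\<Sum>i\<in>UNIV. a $ i * b $ i)"

definition kdot :: "coef \<Rightarrow> lattice \<Rightarrow> complex" where
  "kdot a k = (\<Sum>i\<in>UNIV. a $ i * of_int (k $ i))"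

text \<open>Real, zero-mean, divergence-free fields: w_0 = 0, w_{-k} = conj w_k, w_k . k = 0.\<close>
definition is_field :: "field \<Rightarrow> bool" where
  "is_field w \<longleftrightarrow> w 0 = 0 \<and> (\<forall>k. w (- k) = (\<chi> i. cnj (w k $ i))) \<and> (\<forall>k. kdot (w k) k = 0)"

definition Vweight :: "real \<Rightarrow> field \<Rightarrow> lattice \<Rightarrow> real" where
  "Vweight s w k = (norm (w k))^2 * (knorm k powr (2 * s))"

definition inV :: "real \<Rightarrow> field \<Rightarrow> bool" where
  "inV s w \<longleftrightarrow> is_field w \<and> (Vweight s w) summable_on (UNIV - {0})"

definition Vnorm :: "real \<Rightarrow> field \<Rightarrow> real" where
  "Vnorm s w = sqrt (\<Sum>\<^sub>\<infinity>k\<in>UNIV - {0}. Vweight s w k)"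

definition Lam :: "real \<Rightarrow> field \<Rightarrow> field" where
  "Lam s w = (\<lambda>k. if k = 0 then 0 else (knorm k powr s) *\<^sub>R w k)"

text \<open>The L^2 pairing <B(u,v),w> = int_T ((u.nabla) v) . w dx, written in Fourier variables
(Parseval): (u.nabla)v = sum_{j,l} i (u_j . l) v_l e^{i(j+l)x}, and integrating against
w = sum_m w_m e^{imx} over T yields (2 pi)^3 times the sum over j + l + m = 0.\<close>
definition Bpair :: "field \<Rightarrow> field \<Rightarrow> field \<Rightarrow> complex" where
  "Bpair u v w = (2 * of_real pi) ^ 3 *
     (\<Sum>\<^sub>\<infinity>(j, l)\<in>UNIV. \<i> * kdot (u j) l * cdot (v l) (w (- (j + l))))"

end

theory Submission
  imports Defs
begin

text \<open>Write m = -(j + l) for the third frequency of a triad j + l + m = 0. Since u_j . j = 0 for the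
divergence-free field u = Lambda^{-2 alpha} v, the substitution l \<mapsto> m reverses the sign of u_j . l, so
twice the pairing is the sum of i (u_j . l) (v_l . v_m) (|m|^{2r} - |l|^{2r}): only the commutator of
Lambda^{2r} with the transport enters. With x = |j|, y = |l|, z = |m|, which satisfy the triangle
inequalities, the kernel x^{2 beta - 5/2} y \<bar>z^{2r} - y^{2r}\<bar> is bounded in the three regimes
x \<le> y/2 (mean value theorem), z \<le> y/2, and x, z > y/2 by products of the form
|j|^{beta - 3/2} |l|^{r + beta} |m|^r up to a permutation of the triad. Each resulting triple sum is
controlled by Young's inequality l^1 * l^2 * l^2, and the l^1 factor by Cauchy-Schwarz:
sum_k |k|^{beta - 3/2} |v_k| \<le> (sum_k |k|^{-3 - 2 beta})^{1/2} |v|_{V^{2 beta}}, a convergent lattice sum.\<close>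

section \<open>Elementary real inequalities\<close>

lemma le_sqrt_mult_sqrt_if_le_weighted_mean:
  fixes X A B :: real
  assumes "A \<ge> 0" and "B \<ge> 0" and mean: "\<And>t. t > 0 \<Longrightarrow> 2 * X \<le> t * A + B / t"
  shows "X \<le> sqrt A * sqrt B"
proof (cases "A > 0 \<and> B > 0")
  case True
  define a b where "a = sqrt A" and "b = sqrt B"
  have "a > 0" "b > 0" "A = a\<^sup>2" "B = b\<^sup>2" using True by (simp_all add: a_def b_def)
  have "2 * X \<le> b / a * A + B / (b / a)" using \<open>a > 0\<close> \<open>b > 0\<close> by (intro mean) simp
  also have "\<dots> = 2 * (a * b)"
    using \<open>a > 0\<close> \<open>b > 0\<close> by (simp add: \<open>A = a\<^sup>2\<close> \<open>B = b\<^sup>2\<close> power2_eq_square)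
  finally show ?thesis by (simp add: a_def b_def)
next
  case False
  then have "A = 0 \<or> B = 0" using assms by linarith
  show ?thesis
  proof (rule ccontr)
    assume "\<not> ?thesis"
    then have X: "X > 0" using \<open>A = 0 \<or> B = 0\<close> by auto
    show False
    proof (cases "A = 0")
      case True
      define t where "t = (B + 1) / X"
      have "2 * X \<le> B / t" using mean[of t] True X \<open>B \<ge> 0\<close> by (simp add: t_def)
      moreover have "B / t < X" using X \<open>B \<ge> 0\<close> by (simp add: t_def field_simps)
      ultimately show False using X by linarith
    next
      case False
      with \<open>A = 0 \<or> B = 0\<close> have "B = 0" by simp
      have "2 * X \<le> X / (A + 1) * A" using mean[of "X / (A + 1)"] \<open>B = 0\<close> X \<open>A \<ge> 0\<close> by simp
      moreover have "X / (A + 1) * A < X" using X \<open>A \<ge> 0\<close> by (simp add: field_simps)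
      ultimately show False using X by linarith
    qed
  qed
qed

lemma mult_le_weighted_mean_of_squares:
  fixes a b t :: real
  assumes "t > 0"
  shows "2 * (a * b) \<le> t * a\<^sup>2 + b\<^sup>2 / t"
proof -
  have "0 \<le> (t * a - b)\<^sup>2 / t" using assms by simp
  also have "(t * a - b)\<^sup>2 / t = t * a\<^sup>2 + b\<^sup>2 / t - 2 * a * b"
    using assms by (simp add: field_simps power2_eq_square)
  finally show ?thesis by simp
qed

lemma powr_square: "((x::real) powr a)\<^sup>2 = x powr (2 * a)"
  by (simp add: power2_eq_square flip: powr_add)

lemma powr_mult_powr_regroup:
  fixes x :: real
  assumes "a + b = c + d"
  shows "x powr a * x powr b = x powr c * x powr d"
  by (simp add: assms flip: powr_add)

lemma powr_mult_powr_mult_powr_regroup: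
  fixes x :: real
  assumes "a + b + c = a' + b' + c'"
  shows "x powr a * x powr b * x powr c = x powr a' * x powr b' * x powr c'"
  by (simp add: assms flip: powr_add)

lemma comparable_powr_le:
  fixes c y m e :: real
  assumes "y > 0" and "m \<ge> 1" and "y / m \<le> c" and "c \<le> m * y"
  shows "c powr e \<le> m powr \<bar>e\<bar> * y powr e"
proof (cases "e \<ge> 0")
  case True
  have "0 < y / m" using assms by simp
  then have "c powr e \<le> (m * y) powr e"
    using assms True by (intro powr_mono2) linarith+
  then show ?thesis using True assms by (simp add: powr_mult)
next
  case False
  have "c powr e \<le> (y / m) powr e"
    using assms False by (intro powr_mono2') (auto simp: field_simps)
  then show ?thesis using False assms by (simp add: powr_divide powr_minus_divide)
qed

lemma abs_powr_diff_le:
  fixes s y a b :: real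
  assumes "s > 0" and "y > 0" and "y / 2 \<le> a" "a \<le> 2 * y" and "y / 2 \<le> b" "b \<le> 2 * y"
  shows "\<bar>b powr s - a powr s\<bar> \<le> s * 2 powr \<bar>s - 1\<bar> * y powr (s - 1) * \<bar>b - a\<bar>"
  using assms
proof (induction a b rule: linorder_wlog)
  case (le a b)
  show ?case
  proof (cases "a = b")
    case False
    then have "a < b" using le by simp
    moreover have "((\<lambda>t. t powr s) has_real_derivative s * x powr (s - 1)) (at x)"
      if "a \<le> x" for x
      using that le by (intro has_real_derivative_powr) auto
    ultimately obtain c
      where c: "a < c" "c < b" "b powr s - a powr s = (b - a) * (s * c powr (s - 1))"
      using MVT2[of a b "\<lambda>t. t powr s" "\<lambda>x. s * x powr (s - 1)"] by blast
    have "c powr (s - 1) \<le> 2 powr \<bar>s - 1\<bar> * y powr (s - 1)"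
      using c le by (intro comparable_powr_le) auto
    then have "\<bar>b - a\<bar> * (s * c powr (s - 1)) \<le> \<bar>b - a\<bar> * (s * (2 powr \<bar>s - 1\<bar> * y powr (s - 1)))"
      using le by (intro mult_left_mono) auto
    then show ?thesis using c le by (simp add: abs_mult ac_simps)
  qed simp
next
  case (sym a b)
  then show ?case by (simp add: abs_minus_commute)
qed

section \<open>Unconditional sums\<close>

lemma nonneg_infsum_Cauchy_Schwarz:
  fixes f g :: "'a \<Rightarrow> real"
  assumes f: "\<And>x. f x \<ge> 0" and g: "\<And>x. g x \<ge> 0"
    and f2: "(\<lambda>x. (f x)\<^sup>2) summable_on A" and g2: "(\<lambda>x. (g x)\<^sup>2) summable_on A"
  shows "(\<lambda>x. f x * g x) summable_on A"
    and "(\<Sum>\<^sub>\<infinity>x\<in>A. f x * g x) \<le> sqrt (\<Sum>\<^sub>\<infinity>x\<in>A. (f x)\<^sup>2) * sqrt (\<Sum>\<^sub>\<infinity>x\<in>A. (g x)\<^sup>2)"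
proof -
  define a where "a = (\<Sum>\<^sub>\<infinity>x\<in>A. (f x)\<^sup>2)"
  define b where "b = (\<Sum>\<^sub>\<infinity>x\<in>A. (g x)\<^sup>2)"
  have mean_sum: "((\<lambda>x. t * (f x)\<^sup>2 + (g x)\<^sup>2 / t) has_sum t * a + b / t) A" for t
    unfolding a_def b_def
    by (intro has_sum_add has_sum_cmult_right has_sum_divide_const has_sum_infsum f2 g2)
  have pointwise: "2 * (f x * g x) \<le> t * (f x)\<^sup>2 + (g x)\<^sup>2 / t" if "t > 0" for t x
    using mult_le_weighted_mean_of_squares[OF that] .
  have "f x * g x \<le> 1 * (f x)\<^sup>2 + (g x)\<^sup>2 / 1" for x
    using pointwise[of 1 x] mult_nonneg_nonneg[OF f[of x] g[of x]] by simp
  then show fg: "(\<lambda>x. f x * g x) summable_on A"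
    using summable_on_comparison_test[OF has_sum_imp_summable[OF mean_sum[of 1]]] f g by simp
  show "(\<Sum>\<^sub>\<infinity>x\<in>A. f x * g x) \<le> sqrt a * sqrt b"
  proof (rule le_sqrt_mult_sqrt_if_le_weighted_mean)
    fix t :: real assume "t > 0"
    then show "2 * (\<Sum>\<^sub>\<infinity>x\<in>A. f x * g x) \<le> t * a + b / t"
      using has_sum_mono[OF has_sum_cmult_right[OF has_sum_infsum[OF fg]] mean_sum] pointwise
      by blast
  qed (auto simp: a_def b_def infsum_nonneg)
qed

lemma summable_on_reindex_involution:
  assumes "\<And>x. \<sigma> (\<sigma> x) = x"
  shows "(\<lambda>x. f (\<sigma> x)) summable_on UNIV \<longleftrightarrow> f summable_on UNIV"
  by (rule summable_on_reindex_bij_witness[of _ \<sigma> \<sigma>]) (use assms in auto)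

lemma infsum_reindex_involution:
  assumes "\<And>x. \<sigma> (\<sigma> x) = x"
  shows "(\<Sum>\<^sub>\<infinity>x. f (\<sigma> x)) = (\<Sum>\<^sub>\<infinity>x. f x)"
  by (rule infsum_reindex_bij_witness[of _ \<sigma> \<sigma>]) (use assms in auto)

lemma norm_infsum_le_symmetrized:
  fixes f :: "'a \<Rightarrow> 'b::banach" and M :: "'a \<Rightarrow> real"
  assumes "\<And>x. \<sigma> (\<sigma> x) = x"
    and "\<And>x. norm (f x + f (\<sigma> x)) \<le> M x" and "M summable_on UNIV"
  shows "2 * norm (\<Sum>\<^sub>\<infinity>x. f x) \<le> (\<Sum>\<^sub>\<infinity>x. M x)"
proof (cases "f summable_on UNIV")
  case False
  \<comment> \<open>no summability of f is assumed: a non-summable family has sum 0 by convention\<close>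
  have "0 \<le> M x" for x using assms(2)[of x] norm_ge_zero[of "f x + f (\<sigma> x)"] by linarith
  then show ?thesis using False by (simp add: infsum_not_exists infsum_nonneg)
next
  case True
  then have "(\<lambda>x. f (\<sigma> x)) summable_on UNIV"
    using summable_on_reindex_involution[OF assms(1)] by blast
  then have sym: "(\<lambda>x. f x + f (\<sigma> x)) summable_on UNIV"
    and sym_sum: "(\<Sum>\<^sub>\<infinity>x. f x + f (\<sigma> x)) = 2 *\<^sub>R (\<Sum>\<^sub>\<infinity>x. f x)"
    using summable_on_add[OF True] infsum_add[OF True] infsum_reindex_involution[OF assms(1), of f]
    by (simp_all add: scaleR_2)
  have norm_sym: "(\<lambda>x. norm (f x + f (\<sigma> x))) summable_on UNIV"
    using summable_on_comparison_test[OF assms(3) assms(2)] by simp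
  have "2 * norm (\<Sum>\<^sub>\<infinity>x. f x) = norm (\<Sum>\<^sub>\<infinity>x. f x + f (\<sigma> x))"
    by (simp add: sym_sum)
  also have "\<dots> \<le> (\<Sum>\<^sub>\<infinity>x. norm (f x + f (\<sigma> x)))"
    using norm_sym by (intro norm_infsum_bound) simp
  also have "\<dots> \<le> (\<Sum>\<^sub>\<infinity>x. M x)"
    by (rule infsum_mono[OF norm_sym assms(3)]) (rule assms(2))
  finally show ?thesis .
qed

lemma convolution_Young_bound:
  fixes F G H :: "'a::ab_group_add \<Rightarrow> real"
  assumes F: "\<And>k. F k \<ge> 0" and G: "\<And>k. G k \<ge> 0" and H: "\<And>k. H k \<ge> 0"
    and F1: "F summable_on UNIV"
    and G2: "(\<lambda>k. (G k)\<^sup>2) summable_on UNIV" and H2: "(\<lambda>k. (H k)\<^sup>2) summable_on UNIV"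
  shows "(\<lambda>(j, l). F j * G l * H (- (j + l))) summable_on UNIV"
    and "(\<Sum>\<^sub>\<infinity>(j, l). F j * G l * H (- (j + l)))
           \<le> (\<Sum>\<^sub>\<infinity>k. F k) * sqrt (\<Sum>\<^sub>\<infinity>k. (G k)\<^sup>2) * sqrt (\<Sum>\<^sub>\<infinity>k. (H k)\<^sup>2)"
proof -
  define N where "N = sqrt (\<Sum>\<^sub>\<infinity>k. (G k)\<^sup>2) * sqrt (\<Sum>\<^sub>\<infinity>k. (H k)\<^sup>2)"
  define c where "c j = (\<Sum>\<^sub>\<infinity>l. G l * H (- (j + l)))" for j
  have shift: "- (j + - (j + l)) = l" for j l :: 'a by simp
  have H2_shift: "(\<lambda>l. (H (- (j + l)))\<^sup>2) summable_on UNIV"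
    and H2_shift_sum: "(\<Sum>\<^sub>\<infinity>l. (H (- (j + l)))\<^sup>2) = (\<Sum>\<^sub>\<infinity>k. (H k)\<^sup>2)" for j
    using summable_on_reindex_involution[of "\<lambda>l. - (j + l)" "\<lambda>k. (H k)\<^sup>2"]
      infsum_reindex_involution[of "\<lambda>l. - (j + l)" "\<lambda>k. (H k)\<^sup>2"] H2 shift by auto
  have inner: "((\<lambda>l. F j * G l * H (- (j + l))) has_sum F j * c j) UNIV" for j
    using has_sum_cmult_right[OF has_sum_infsum, OF nonneg_infsum_Cauchy_Schwarz(1)[OF G H G2 H2_shift]]
    by (simp add: c_def mult.assoc)
  have c: "0 \<le> c j" "c j \<le> N" for j
    using nonneg_infsum_Cauchy_Schwarz(2)[OF G H G2 H2_shift, of j] G H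
    unfolding c_def N_def H2_shift_sum by (auto intro: infsum_nonneg)
  have outer: "(\<lambda>j. F j * c j) summable_on UNIV"
    by (rule summable_on_comparison_test[OF summable_on_cmult_left[OF F1, of N]])
      (use F c in \<open>auto intro: mult_left_mono\<close>)
  have sum: "(\<lambda>(j, l). F j * G l * H (- (j + l))) summable_on Sigma UNIV (\<lambda>_. UNIV)"
    by (rule summable_on_SigmaI[where g = "\<lambda>j. F j * c j"]) (use inner outer F G H in auto)
  then show "(\<lambda>(j, l). F j * G l * H (- (j + l))) summable_on UNIV" by simp
  have "((\<lambda>(j, l). F j * G l * H (- (j + l))) has_sum (\<Sum>\<^sub>\<infinity>j. F j * c j)) (Sigma UNIV (\<lambda>_. UNIV))"
    by (rule has_sum_SigmaI[where g = "\<lambda>j. F j * c j"]) (use inner outer sum in auto)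
  then have "(\<Sum>\<^sub>\<infinity>(j, l). F j * G l * H (- (j + l))) = (\<Sum>\<^sub>\<infinity>j. F j * c j)"
    by (simp add: infsumI)
  also have "\<dots> \<le> (\<Sum>\<^sub>\<infinity>j. F j * N)"
    by (rule infsum_mono[OF outer summable_on_cmult_left[OF F1]])
      (use F c in \<open>auto intro: mult_left_mono\<close>)
  also have "\<dots> = (\<Sum>\<^sub>\<infinity>k. F k) * N" by (rule infsum_cmult_left')
  finally show "(\<Sum>\<^sub>\<infinity>(j, l). F j * G l * H (- (j + l)))
      \<le> (\<Sum>\<^sub>\<infinity>k. F k) * sqrt (\<Sum>\<^sub>\<infinity>k. (G k)\<^sup>2) * sqrt (\<Sum>\<^sub>\<infinity>k. (H k)\<^sup>2)"
    by (simp add: N_def mult.assoc)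
qed

lemma summable_on_product_nonneg:
  fixes f :: "'a \<Rightarrow> real" and g :: "'b \<Rightarrow> real"
  assumes "\<And>x. f x \<ge> 0" and "\<And>y. g y \<ge> 0" and "f summable_on UNIV" and "g summable_on UNIV"
  shows "(\<lambda>(x, y). f x * g y) summable_on UNIV"
proof -
  have "(\<lambda>(x, y). f x * g y) summable_on Sigma UNIV (\<lambda>_. UNIV)"
  proof (rule summable_on_SigmaI[where g = "\<lambda>x. f x * infsum g UNIV"])
    show "((\<lambda>y. (\<lambda>(x, y). f x * g y) (x, y)) has_sum f x * infsum g UNIV) UNIV" for x
      using has_sum_cmult_right[OF has_sum_infsum[OF assms(4)]] by simp
  qed (use assms summable_on_cmult_left in auto)
  then show ?thesis by simp
qed

lemma summable_on_int_from_nat: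
  fixes f :: "int \<Rightarrow> real"
  assumes "(\<lambda>n. f (int n)) summable_on UNIV" and "(\<lambda>n. f (- int n)) summable_on UNIV"
  shows "f summable_on UNIV"
proof -
  have "f summable_on range int" and "f summable_on range (\<lambda>n. - int n)"
    using assms by (simp_all add: summable_on_reindex inj_on_def o_def)
  moreover have "range int \<union> range (\<lambda>n. - int n) = UNIV"
    by (auto intro: range_eqI[of _ _ "nat _"] simp: image_iff) presburger
  ultimately show ?thesis by (metis summable_on_union)
qed

lemma summable_on_one_plus_square_powr:
  assumes "q > 1 / 2"
  shows "(\<lambda>n::int. (1 + (real_of_int n)\<^sup>2) powr (- q)) summable_on UNIV"
proof (rule summable_on_int_from_nat)
  have "summable (\<lambda>n. (1 + (real n)\<^sup>2) powr (- q))"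
  proof (rule summable_comparison_test')
    show "summable (\<lambda>n. real n powr (- 2 * q))" using assms by (simp add: summable_real_powr_iff)
    fix n :: nat assume "n \<ge> 1"
    then have "(1 + (real n)\<^sup>2) powr (- q) \<le> (real n powr 2) powr (- q)"
      using assms by (intro powr_mono2') (auto simp: powr_numeral)
    also have "\<dots> = real n powr (- 2 * q)" by (simp only: powr_powr) simp
    finally show "norm ((1 + (real n)\<^sup>2) powr (- q)) \<le> real n powr (- 2 * q)" by simp
  qed
  then show "(\<lambda>n. (1 + (real_of_int (int n))\<^sup>2) powr (- q)) summable_on UNIV"
    and "(\<lambda>n. (1 + (real_of_int (- int n))\<^sup>2) powr (- q)) summable_on UNIV"
    by (simp_all add: summable_on_UNIV_nonneg_real_iff)
qed

section \<open>The lattice\<close>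

lemma knorm_eq_norm: "knorm k = norm (\<chi> i. real_of_int (k $ i))"
  unfolding knorm_def norm_vec_def L2_set_def by simp

lemma knorm_nonneg: "knorm k \<ge> 0"
  by (simp add: knorm_eq_norm)

lemma knorm_minus: "knorm (- k) = knorm k"
proof -
  have "(\<chi> i. real_of_int ((- k) $ i)) = - (\<chi> i. real_of_int (k $ i))" by (simp add: vec_eq_iff)
  then show ?thesis by (simp add: knorm_eq_norm)
qed

lemma knorm_triangle: "knorm (j + l) \<le> knorm j + knorm l"
proof -
  have "(\<chi> i. real_of_int ((j + l) $ i)) = (\<chi> i. real_of_int (j $ i)) + (\<chi> i. real_of_int (l $ i))"
    by (simp add: vec_eq_iff)
  then show ?thesis by (simp add: knorm_eq_norm norm_triangle_ineq)
qed

lemma knorm_square: "(knorm k)\<^sup>2 = (\<Sum>i\<in>UNIV. (real_of_int (k $ i))\<^sup>2)"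
  unfolding knorm_def by (simp add: sum_nonneg)

lemma coordinate_square_le_knorm_square: "(real_of_int (k $ i))\<^sup>2 \<le> (knorm k)\<^sup>2"
  unfolding knorm_square by (rule member_le_sum) auto

lemma knorm_ge_1:
  assumes "k \<noteq> 0"
  shows "knorm k \<ge> 1"
proof -
  obtain i where "k $ i \<noteq> 0" using assms by (auto simp: vec_eq_iff)
  then have "1 \<le> \<bar>real_of_int (k $ i)\<bar>" by linarith
  then have "1 \<le> \<bar>real_of_int (k $ i)\<bar>\<^sup>2" by (rule one_le_power)
  also have "\<dots> = (real_of_int (k $ i))\<^sup>2" by simp
  also have "\<dots> \<le> (knorm k)\<^sup>2" by (rule coordinate_square_le_knorm_square)
  finally show ?thesis using power2_le_imp_le[of 1 "knorm k"] knorm_nonneg[of k] by simp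
qed

text \<open>Since 1 + k_i^2 \<le> 2 |k|^2 for k \<noteq> 0, the lattice sum of |k|^{-p} is dominated by a
product of three sums over the integers.\<close>

lemma knorm_powr_le_coordinate_product:
  assumes "k \<noteq> 0" and "p \<ge> 0"
  shows "knorm k powr (- p)
    \<le> 8 powr (p / 6) * (\<Prod>i\<in>UNIV. (1 + (real_of_int (k $ i))\<^sup>2) powr (- p / 6))"
proof -
  define s where "s = (knorm k)\<^sup>2"
  have "knorm k \<ge> 1" using assms knorm_ge_1 by blast
  then have "s \<ge> 1" by (simp add: s_def one_le_power)
  define P where "P = (\<Prod>i\<in>UNIV. 1 + (real_of_int (k $ i))\<^sup>2)"
  have "P \<ge> 1" unfolding P_def by (intro prod_ge_1) simp
  have "1 + (real_of_int (k $ i))\<^sup>2 \<le> 2 * s" for i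
    using \<open>s \<ge> 1\<close> coordinate_square_le_knorm_square[of k i] by (simp add: s_def)
  then have "P \<le> (\<Prod>i\<in>(UNIV :: 3 set). 2 * s)"
    unfolding P_def by (intro prod_mono) auto
  then have "P \<le> 8 * s ^ 3" by (simp add: power_mult_distrib)
  have "knorm k powr 6 = s ^ 3"
    using knorm_nonneg[of k] by (simp add: s_def powr_numeral flip: power_mult)
  have "knorm k powr (- p) = (knorm k powr 6) powr (- p / 6)" by (simp add: powr_powr)
  also have "\<dots> = (s ^ 3) powr (- p / 6)" by (simp only: \<open>knorm k powr 6 = s ^ 3\<close>)
  also have "\<dots> = (8 powr (p / 6) * 8 powr (- p / 6)) * (s ^ 3) powr (- p / 6)"
    by (simp flip: powr_add)
  also have "\<dots> = 8 powr (p / 6) * (8 * s ^ 3) powr (- p / 6)"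
    by (simp add: powr_mult)
  also have "\<dots> \<le> 8 powr (p / 6) * P powr (- p / 6)"
    using \<open>P \<ge> 1\<close> \<open>P \<le> 8 * s ^ 3\<close> assms by (intro mult_left_mono powr_mono2') auto
  also have "P powr (- p / 6) = (\<Prod>i\<in>UNIV. (1 + (real_of_int (k $ i))\<^sup>2) powr (- p / 6))"
    unfolding P_def by (rule prod_powr_distrib)
  finally show ?thesis .
qed

lemma summable_on_coordinate_product:
  fixes g :: "int \<Rightarrow> real"
  assumes "\<And>n. g n \<ge> 0" and "g summable_on UNIV"
  shows "(\<lambda>k::lattice. \<Prod>i\<in>UNIV. g (k $ i)) summable_on UNIV"
proof -
  have "(\<lambda>(b, c). g b * g c) summable_on UNIV"
    using summable_on_product_nonneg[OF assms(1) assms(1) assms(2) assms(2)] .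
  moreover have "0 \<le> (\<lambda>(b, c). g b * g c) bc" for bc
    using assms(1) by (cases bc) simp
  ultimately have "(\<lambda>(a, bc). g a * (\<lambda>(b, c). g b * g c) bc) summable_on UNIV"
    using summable_on_product_nonneg[OF assms(1) _ assms(2)] by blast
  moreover have "(\<lambda>k::lattice. g (k $ 1) * (g (k $ 2) * g (k $ 3))) summable_on UNIV
      \<longleftrightarrow> (\<lambda>(a, bc). g a * (\<lambda>(b, c). g b * g c) bc) summable_on UNIV"
    by (rule summable_on_reindex_bij_witness[where i = "\<lambda>(a, b, c). vector [a, b, c]"
          and j = "\<lambda>k. (k $ 1, k $ 2, k $ 3)"]) (auto simp: vec_eq_iff forall_3)
  moreover have "(\<Prod>i\<in>UNIV. g (k $ i)) = g (k $ 1) * (g (k $ 2) * g (k $ 3))" for k :: lattice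
    unfolding UNIV_3 by simp
  ultimately show ?thesis by simp
qed

lemma summable_on_knorm_powr:
  assumes "p > 3"
  shows "(\<lambda>k. knorm k powr (- p)) summable_on UNIV"
proof (rule summable_on_comparison_test)
  define g where "g n = (1 + (real_of_int n)\<^sup>2) powr (- p / 6)" for n
  have "g summable_on UNIV"
    using summable_on_one_plus_square_powr[of "p / 6"] assms by (simp add: g_def[abs_def])
  with summable_on_coordinate_product[of g]
  show "(\<lambda>k::lattice. 8 powr (p / 6) * (\<Prod>i\<in>UNIV. g (k $ i))) summable_on UNIV"
    by (intro summable_on_cmult_right) (simp add: g_def)
  fix k :: lattice
  show "knorm k powr (- p) \<le> 8 powr (p / 6) * (\<Prod>i\<in>UNIV. g (k $ i))"
  proof (cases "k = 0")
    case True
    then show ?thesis by (simp add: knorm_def g_def prod_nonneg)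
  next
    case False
    then show ?thesis using knorm_powr_le_coordinate_product[of k p] assms by (simp add: g_def)
  qed
qed simp

lemma norm_kdot_le: "norm (kdot a k) \<le> norm a * knorm k"
proof -
  have "norm (kdot a k) \<le> (\<Sum>i\<in>UNIV. norm (a $ i) * \<bar>real_of_int (k $ i)\<bar>)"
    unfolding kdot_def by (rule order_trans[OF norm_sum]) (simp add: norm_mult)
  also have "\<dots> \<le> L2_set (\<lambda>i. norm (a $ i)) UNIV * L2_set (\<lambda>i. real_of_int (k $ i)) UNIV"
    using L2_set_mult_ineq[of "\<lambda>i. norm (a $ i)" "\<lambda>i. real_of_int (k $ i)" UNIV] by simp
  also have "\<dots> = norm a * knorm k"
    by (simp add: norm_vec_def knorm_def L2_set_def)
  finally show ?thesis .
qed

lemma norm_cdot_le: "norm (cdot a b) \<le> norm a * norm b"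
proof -
  have "norm (cdot a b) \<le> (\<Sum>i\<in>UNIV. norm (a $ i) * norm (b $ i))"
    unfolding cdot_def by (rule order_trans[OF norm_sum]) (simp add: norm_mult)
  also have "\<dots> \<le> L2_set (\<lambda>i. norm (a $ i)) UNIV * L2_set (\<lambda>i. norm (b $ i)) UNIV"
    using L2_set_mult_ineq[of "\<lambda>i. norm (a $ i)" "\<lambda>i. norm (b $ i)" UNIV] by simp
  also have "\<dots> = norm a * norm b"
    by (simp add: norm_vec_def)
  finally show ?thesis .
qed

lemma kdot_add_right: "kdot a (j + l) = kdot a j + kdot a l"
  by (simp add: kdot_def distrib_left sum.distrib)

lemma kdot_minus_right: "kdot a (- k) = - kdot a k"
  by (simp add: kdot_def sum_negf)

lemma kdot_scaleR_left: "kdot (c *\<^sub>R a) k = of_real c * kdot a k"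
  unfolding kdot_def vector_scaleR_component
  by (simp add: sum_distrib_left scaleR_conv_of_real mult.assoc)

lemma cdot_commute: "cdot a b = cdot b a"
  by (simp add: cdot_def mult.commute)

lemma cdot_scaleR_right: "cdot a (c *\<^sub>R b) = of_real c * cdot a b"
  unfolding cdot_def vector_scaleR_component
  by (simp add: sum_distrib_left scaleR_conv_of_real mult.left_commute)

section \<open>The commutator kernel\<close>

lemma kernel_bound_small_left:
  fixes x y z r \<beta> :: real
  assumes "x > 0" "y > 0" "z > 0" and "z \<le> x + y" "y \<le> x + z"
    and "r > 0" "\<beta> > 0" and small: "x \<le> y / 2"
  shows "x powr (2 * \<beta> - 5/2) * y * \<bar>z powr (2 * r) - y powr (2 * r)\<bar>
    \<le> (2 * r * 2 powr \<bar>2 * r - 1\<bar> * 2 powr r) * (x powr (\<beta> - 3/2) * y powr (r + \<beta>) * z powr r)"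
proof -
  define c where "c = 2 * r * 2 powr \<bar>2 * r - 1\<bar>"
  have "c \<ge> 0" using assms by (simp add: c_def)
  have "\<bar>z powr (2 * r) - y powr (2 * r)\<bar> \<le> c * y powr (2 * r - 1) * \<bar>z - y\<bar>"
    unfolding c_def using assms by (intro abs_powr_diff_le) auto
  also have "\<dots> \<le> c * y powr (2 * r - 1) * x"
    using assms \<open>c \<ge> 0\<close> by (intro mult_left_mono) auto
  finally have "x powr (2 * \<beta> - 5/2) * y * \<bar>z powr (2 * r) - y powr (2 * r)\<bar>
      \<le> x powr (2 * \<beta> - 5/2) * y * (c * y powr (2 * r - 1) * x)"
    using assms by (intro mult_left_mono) auto
  also have "\<dots> = c * (x powr (2 * \<beta> - 5/2) * x powr 1) * (y powr 1 * y powr (2 * r - 1))"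
    using assms by (simp add: ac_simps)
  also have "\<dots> = c * (x powr (\<beta> - 3/2) * x powr \<beta>) * (y powr (r + \<beta>) * y powr (r - \<beta>))"
    by (simp only: powr_mult_powr_regroup[of "2 * \<beta> - 5/2" 1 "\<beta> - 3/2" \<beta>]
        powr_mult_powr_regroup[of 1 "2 * r - 1" "r + \<beta>" "r - \<beta>"])
  also have "\<dots> \<le> c * (x powr (\<beta> - 3/2) * y powr \<beta>) * (y powr (r + \<beta>) * y powr (r - \<beta>))"
    using assms \<open>c \<ge> 0\<close> by (intro mult_right_mono mult_left_mono powr_mono2) auto
  also have "\<dots> = c * x powr (\<beta> - 3/2) * (y powr \<beta> * y powr (r - \<beta>)) * y powr (r + \<beta>)"
    by (simp add: ac_simps)
  also have "\<dots> = c * x powr (\<beta> - 3/2) * y powr (r + \<beta>) * y powr r"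
    using powr_mult_powr_regroup[of \<beta> "r - \<beta>" 0 r y] by (simp add: ac_simps)
  also have "\<dots> \<le> c * x powr (\<beta> - 3/2) * y powr (r + \<beta>) * (2 powr r * z powr r)"
    using assms \<open>c \<ge> 0\<close> comparable_powr_le[of z 2 y r]
    by (intro mult_left_mono) auto
  finally show ?thesis by (simp add: c_def ac_simps)
qed

lemma kernel_bound_small_right:
  fixes x y z r \<beta> :: real
  assumes "x > 0" "y > 0" "z > 0" and "y \<le> x + z" "x \<le> y + z"
    and "r > 0" "\<beta> < 5/4" and small: "z \<le> y / 2"
  shows "x powr (2 * \<beta> - 5/2) * y * \<bar>z powr (2 * r) - y powr (2 * r)\<bar>
    \<le> (2 powr \<bar>2 * \<beta> - 5/2\<bar> * 2 powr r) * (z powr (\<beta> - 3/2) * y powr (r + \<beta>) * x powr r)"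
proof -
  define c where "c = 2 powr \<bar>2 * \<beta> - 5/2\<bar>"
  have "\<bar>z powr (2 * r) - y powr (2 * r)\<bar> \<le> y powr (2 * r)"
    using assms powr_mono2[of "2 * r" z y] by auto
  moreover have "x powr (2 * \<beta> - 5/2) \<le> c * y powr (2 * \<beta> - 5/2)"
    unfolding c_def using assms by (intro comparable_powr_le) auto
  ultimately have "x powr (2 * \<beta> - 5/2) * y * \<bar>z powr (2 * r) - y powr (2 * r)\<bar>
      \<le> (c * y powr (2 * \<beta> - 5/2)) * y * y powr (2 * r)"
    using assms by (intro mult_mono) (auto simp: c_def)
  also have "\<dots> = c * (y powr (2 * \<beta> - 5/2) * y powr 1 * y powr (2 * r))"
    using assms by simp
  also have "\<dots> = c * (y powr (\<beta> - 3/2) * y powr (r + \<beta>) * y powr r)"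
    by (simp only: powr_mult_powr_mult_powr_regroup[of "2 * \<beta> - 5/2" 1 "2 * r" "\<beta> - 3/2" "r + \<beta>" r])
  also have "\<dots> \<le> c * (z powr (\<beta> - 3/2) * y powr (r + \<beta>) * (2 powr r * x powr r))"
    using assms powr_mono2'[of "\<beta> - 3/2" z y] comparable_powr_le[of x 2 y r]
    by (intro mult_left_mono mult_mono) (auto simp: c_def)
  finally show ?thesis by (simp add: c_def ac_simps)
qed

lemma kernel_bound_large_left_right:
  fixes x y z r \<beta> :: real
  assumes "x > 0" "y > 0" "z > 0" and "z \<le> x + y" "x \<le> y + z"
    and "r > 0" "\<beta> < 5/4" and large: "y / 2 < x" "y / 2 < z"
  shows "x powr (2 * \<beta> - 5/2) * y * \<bar>z powr (2 * r) - y powr (2 * r)\<bar>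
    \<le> (2 powr (5/2 - \<beta>) * 2 powr (2 * r) * 3 powr \<bar>r - \<beta>\<bar>)
        * (y powr (\<beta> - 3/2) * z powr (r + \<beta>) * x powr r)"
proof -
  have "y powr (2 * r) \<le> (2 * z) powr (2 * r)" "z powr (2 * r) \<le> (2 * z) powr (2 * r)"
    using assms by (intro powr_mono2; simp)+
  then have "\<bar>z powr (2 * r) - y powr (2 * r)\<bar> \<le> (2 * z) powr (2 * r)"
    using powr_ge_zero[of y "2 * r"] powr_ge_zero[of z "2 * r"] by linarith
  also have "\<dots> = 2 powr (2 * r) * (z powr (r + \<beta>) * z powr (r - \<beta>))"
    by (simp add: powr_mult powr_mult_powr_regroup[of "r + \<beta>" "r - \<beta>" "2 * r" 0])
  also have "\<dots> \<le> 2 powr (2 * r) * (z powr (r + \<beta>) * (3 powr \<bar>r - \<beta>\<bar> * x powr (r - \<beta>)))"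
    using assms by (intro mult_left_mono comparable_powr_le) auto
  finally have z: "\<bar>z powr (2 * r) - y powr (2 * r)\<bar>
      \<le> 2 powr (2 * r) * 3 powr \<bar>r - \<beta>\<bar> * z powr (r + \<beta>) * x powr (r - \<beta>)"
    by (simp add: ac_simps)
  have "y = y powr (5/2 - \<beta>) * y powr (\<beta> - 3/2)"
    using assms by (simp flip: powr_add)
  also have "\<dots> \<le> (2 * x) powr (5/2 - \<beta>) * y powr (\<beta> - 3/2)"
    using assms by (intro mult_right_mono powr_mono2) auto
  finally have y: "y \<le> 2 powr (5/2 - \<beta>) * x powr (5/2 - \<beta>) * y powr (\<beta> - 3/2)"
    by (simp add: powr_mult)
  have "x powr (2 * \<beta> - 5/2) * y * \<bar>z powr (2 * r) - y powr (2 * r)\<bar>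
      \<le> x powr (2 * \<beta> - 5/2) * (2 powr (5/2 - \<beta>) * x powr (5/2 - \<beta>) * y powr (\<beta> - 3/2))
        * (2 powr (2 * r) * 3 powr \<bar>r - \<beta>\<bar> * z powr (r + \<beta>) * x powr (r - \<beta>))"
    using y z assms by (intro mult_mono mult_left_mono) auto
  also have "\<dots> = (2 powr (5/2 - \<beta>) * 2 powr (2 * r) * 3 powr \<bar>r - \<beta>\<bar>)
      * (y powr (\<beta> - 3/2) * z powr (r + \<beta>)
        * (x powr (2 * \<beta> - 5/2) * x powr (5/2 - \<beta>) * x powr (r - \<beta>)))"
    by (simp add: ac_simps)
  also have "x powr (2 * \<beta> - 5/2) * x powr (5/2 - \<beta>) * x powr (r - \<beta>) = x powr r"
    by (simp flip: powr_add)
  finally show ?thesis by (simp add: ac_simps)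
qed

lemma commutator_kernel_bound:
  fixes r \<beta> :: real
  assumes "r > 0" "\<beta> > 0" "\<beta> < 5/4"
  obtains K where "K > 0"
    and "\<And>x y z. x > 0 \<Longrightarrow> y > 0 \<Longrightarrow> z > 0 \<Longrightarrow> z \<le> x + y \<Longrightarrow> y \<le> x + z \<Longrightarrow> x \<le> y + z \<Longrightarrow>
      x powr (2 * \<beta> - 5/2) * y * \<bar>z powr (2 * r) - y powr (2 * r)\<bar>
        \<le> K * (x powr (\<beta> - 3/2) * y powr (r + \<beta>) * z powr r
              + z powr (\<beta> - 3/2) * y powr (r + \<beta>) * x powr r
              + y powr (\<beta> - 3/2) * z powr (r + \<beta>) * x powr r)"
proof
  define K1 where "K1 = 2 * r * 2 powr \<bar>2 * r - 1\<bar> * 2 powr r"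
  define K2 where "K2 = 2 powr \<bar>2 * \<beta> - 5/2\<bar> * 2 powr r"
  define K3 where "K3 = 2 powr (5/2 - \<beta>) * 2 powr (2 * r) * 3 powr \<bar>r - \<beta>\<bar>"
  have "K1 > 0" "K2 > 0" "K3 > 0" using assms by (simp_all add: K1_def K2_def K3_def)
  then show "K1 + K2 + K3 > 0" by simp
  fix x y z :: real
  assume xyz: "x > 0" "y > 0" "z > 0" "z \<le> x + y" "y \<le> x + z" "x \<le> y + z"
  define T1 where "T1 = x powr (\<beta> - 3/2) * y powr (r + \<beta>) * z powr r"
  define T2 where "T2 = z powr (\<beta> - 3/2) * y powr (r + \<beta>) * x powr r"
  define T3 where "T3 = y powr (\<beta> - 3/2) * z powr (r + \<beta>) * x powr r"
  have "T1 \<ge> 0" "T2 \<ge> 0" "T3 \<ge> 0" by (simp_all add: T1_def T2_def T3_def)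
  have "x powr (2 * \<beta> - 5/2) * y * \<bar>z powr (2 * r) - y powr (2 * r)\<bar> \<le> K1 * T1 + K2 * T2 + K3 * T3"
  proof -
    consider "x \<le> y / 2" | "z \<le> y / 2" | "y / 2 < x" "y / 2 < z" by linarith
    then show ?thesis
    proof cases
      case 1
      with kernel_bound_small_left[of x y z r \<beta>] xyz assms \<open>K2 > 0\<close> \<open>K3 > 0\<close> \<open>T2 \<ge> 0\<close> \<open>T3 \<ge> 0\<close>
      show ?thesis unfolding K1_def T1_def by (smt (verit) mult_nonneg_nonneg)
    next
      case 2
      with kernel_bound_small_right[of x y z r \<beta>] xyz assms \<open>K1 > 0\<close> \<open>K3 > 0\<close> \<open>T1 \<ge> 0\<close> \<open>T3 \<ge> 0\<close>
      show ?thesis unfolding K2_def T2_def by (smt (verit) mult_nonneg_nonneg)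
    next
      case 3
      with kernel_bound_large_left_right[of x y z r \<beta>] xyz assms \<open>K1 > 0\<close> \<open>K2 > 0\<close> \<open>T1 \<ge> 0\<close> \<open>T2 \<ge> 0\<close>
      show ?thesis unfolding K3_def T3_def by (smt (verit) mult_nonneg_nonneg)
    qed
  qed
  also have "\<dots> \<le> (K1 + K2 + K3) * (T1 + T2 + T3)"
    using \<open>K1 > 0\<close> \<open>K2 > 0\<close> \<open>K3 > 0\<close> \<open>T1 \<ge> 0\<close> \<open>T2 \<ge> 0\<close> \<open>T3 \<ge> 0\<close>
    by (simp add: algebra_simps)
  finally show "x powr (2 * \<beta> - 5/2) * y * \<bar>z powr (2 * r) - y powr (2 * r)\<bar>
      \<le> (K1 + K2 + K3) * (x powr (\<beta> - 3/2) * y powr (r + \<beta>) * z powr r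
              + z powr (\<beta> - 3/2) * y powr (r + \<beta>) * x powr r
              + y powr (\<beta> - 3/2) * z powr (r + \<beta>) * x powr r)"
    by (simp only: T1_def T2_def T3_def)
qed

section \<open>Weighted coefficient sums\<close>

definition coef_weight :: "real \<Rightarrow> field \<Rightarrow> lattice \<Rightarrow> real" where
  "coef_weight s v k = knorm k powr s * norm (v k)"

lemma coef_weight_nonneg: "coef_weight s v k \<ge> 0"
  by (simp add: coef_weight_def)

lemma coef_weight_square: "(coef_weight s v k)\<^sup>2 = Vweight s v k"
  by (simp add: coef_weight_def Vweight_def power_mult_distrib powr_square mult.commute)

lemma Vweight_nonneg: "Vweight s v k \<ge> 0"
  unfolding Vweight_def by (intro mult_nonneg_nonneg) simp_all

lemma has_sum_Vweight:
  assumes "inV s v"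
  shows "(Vweight s v has_sum (Vnorm s v)\<^sup>2) UNIV"
proof -
  have "v 0 = 0" and "Vweight s v summable_on (UNIV - {0})"
    using assms by (simp_all add: inV_def is_field_def)
  then have "(Vweight s v has_sum (\<Sum>\<^sub>\<infinity>k\<in>UNIV - {0}. Vweight s v k)) UNIV"
    by (subst has_sum_cong_neutral[where T = "UNIV - {0}" and g = "Vweight s v"])
      (auto simp: Vweight_def)
  moreover have "(\<Sum>\<^sub>\<infinity>k\<in>UNIV - {0}. Vweight s v k) \<ge> 0"
    by (rule infsum_nonneg) (rule Vweight_nonneg)
  ultimately show ?thesis by (simp add: Vnorm_def)
qed

lemma Vnorm_nonneg: "Vnorm s v \<ge> 0"
  unfolding Vnorm_def by (simp add: infsum_nonneg Vweight_nonneg)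

lemma
  assumes "inV s v"
  shows summable_on_coef_weight_square: "(\<lambda>k. (coef_weight s v k)\<^sup>2) summable_on UNIV"
    and sqrt_infsum_coef_weight_square: "sqrt (\<Sum>\<^sub>\<infinity>k. (coef_weight s v k)\<^sup>2) = Vnorm s v"
proof -
  have squares: "(\<lambda>k. (coef_weight s v k)\<^sup>2) = Vweight s v"
    by (simp add: fun_eq_iff coef_weight_square)
  show "(\<lambda>k. (coef_weight s v k)\<^sup>2) summable_on UNIV"
    unfolding squares using has_sum_Vweight[OF assms] by (rule has_sum_imp_summable)
  show "sqrt (\<Sum>\<^sub>\<infinity>k. (coef_weight s v k)\<^sup>2) = Vnorm s v"
    unfolding squares infsumI[OF has_sum_Vweight[OF assms]] using Vnorm_nonneg[of s v] by simp
qed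

lemma inV_mono:
  assumes "inV t v" and "s \<le> t"
  shows "inV s v"
proof -
  have "Vweight s v k \<le> Vweight t v k" if "k \<in> UNIV - {0}" for k
  proof -
    have "knorm k powr (2 * s) \<le> knorm k powr (2 * t)"
      using that assms knorm_ge_1 by (intro powr_mono) auto
    then show ?thesis unfolding Vweight_def by (intro mult_left_mono) auto
  qed
  moreover have "Vweight t v summable_on (UNIV - {0})" using assms by (simp add: inV_def)
  ultimately have "Vweight s v summable_on (UNIV - {0})"
    using summable_on_comparison_test Vweight_nonneg by blast
  then show ?thesis using assms by (simp add: inV_def)
qed

lemma
  assumes "inV t v" and "t - s > 3 / 2"
  shows summable_on_coef_weight: "coef_weight s v summable_on UNIV"
    and infsum_coef_weight_le:
      "(\<Sum>\<^sub>\<infinity>k. coef_weight s v k) \<le> sqrt (\<Sum>\<^sub>\<infinity>k. knorm k powr (2 * (s - t))) * Vnorm t v"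
proof -
  have split: "coef_weight s v = (\<lambda>k. knorm k powr (s - t) * coef_weight t v k)"
    by (simp add: fun_eq_iff coef_weight_def mult.assoc flip: powr_add)
  have square: "(knorm k powr (s - t))\<^sup>2 = knorm k powr (2 * (s - t))" for k
    by (rule powr_square)
  have "(\<lambda>k. knorm k powr (- (2 * (t - s)))) summable_on UNIV"
    using assms by (intro summable_on_knorm_powr) simp
  then have "(\<lambda>k. (knorm k powr (s - t))\<^sup>2) summable_on UNIV"
    unfolding square by (simp add: algebra_simps)
  note weights = this summable_on_coef_weight_square[OF assms(1)]
  from nonneg_infsum_Cauchy_Schwarz[OF _ coef_weight_nonneg weights]
  show "coef_weight s v summable_on UNIV"
    and "(\<Sum>\<^sub>\<infinity>k. coef_weight s v k) \<le> sqrt (\<Sum>\<^sub>\<infinity>k. knorm k powr (2 * (s - t))) * Vnorm t v"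
    unfolding split square sqrt_infsum_coef_weight_square[OF assms(1)] by simp_all
qed

text \<open>The three products of commutator_kernel_bound at x = |j|, y = |l|, z = |-(j + l)|, weighted by
|v_j| |v_l| |v_{-(j+l)}|.\<close>

definition trilinear_majorant :: "real \<Rightarrow> real \<Rightarrow> field \<Rightarrow> lattice \<times> lattice \<Rightarrow> real" where
  "trilinear_majorant r \<beta> v = (\<lambda>(j, l).
       coef_weight (\<beta> - 3/2) v j * coef_weight (r + \<beta>) v l * coef_weight r v (- (j + l))
     + coef_weight (\<beta> - 3/2) v (- (j + l)) * coef_weight (r + \<beta>) v l * coef_weight r v j
     + coef_weight (\<beta> - 3/2) v l * coef_weight (r + \<beta>) v (- (j + l)) * coef_weight r v j)"

lemma
  assumes "inV (2 * \<beta>) v" and "inV (r + \<beta>) v" and "\<beta> > 0"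
  shows summable_on_trilinear_majorant: "trilinear_majorant r \<beta> v summable_on UNIV"
    and infsum_trilinear_majorant_le: "(\<Sum>\<^sub>\<infinity>x. trilinear_majorant r \<beta> v x)
      \<le> 3 * sqrt (\<Sum>\<^sub>\<infinity>k. knorm k powr (- 3 - 2 * \<beta>))
          * Vnorm (2 * \<beta>) v * Vnorm (r + \<beta>) v * Vnorm r v"
proof -
  have "inV r v" using inV_mono[OF assms(2)] assms(3) by simp
  define F where "F = coef_weight (\<beta> - 3/2) v"
  have exponent: "2 * ((\<beta> - 3/2) - 2 * \<beta>) = - 3 - 2 * \<beta>" by simp
  have "3 / 2 < 2 * \<beta> - (\<beta> - 3/2)" using assms(3) by simp
  from summable_on_coef_weight[OF assms(1) this] infsum_coef_weight_le[OF assms(1) this]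
  have F: "F summable_on UNIV"
    and F_sum: "(\<Sum>\<^sub>\<infinity>k. F k) \<le> sqrt (\<Sum>\<^sub>\<infinity>k. knorm k powr (- 3 - 2 * \<beta>)) * Vnorm (2 * \<beta>) v"
    unfolding F_def exponent .
  define Y1 where "Y1 = (\<lambda>(j, l). F j * coef_weight (r + \<beta>) v l * coef_weight r v (- (j + l)))"
  define Y2 where "Y2 = (\<lambda>(j, l). F j * coef_weight r v l * coef_weight (r + \<beta>) v (- (j + l)))"
  define B where "B = (\<Sum>\<^sub>\<infinity>k. F k) * Vnorm (r + \<beta>) v * Vnorm r v"
  have Y1: "Y1 summable_on UNIV" "(\<Sum>\<^sub>\<infinity>x. Y1 x) \<le> B"
    using convolution_Young_bound[of F "coef_weight (r + \<beta>) v" "coef_weight r v", OF _ _ _ F]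
      summable_on_coef_weight_square[OF assms(2)] summable_on_coef_weight_square[OF \<open>inV r v\<close>]
    unfolding Y1_def B_def sqrt_infsum_coef_weight_square[OF assms(2)]
      sqrt_infsum_coef_weight_square[OF \<open>inV r v\<close>]
    by (simp_all add: F_def coef_weight_nonneg)
  have Y2: "Y2 summable_on UNIV" "(\<Sum>\<^sub>\<infinity>x. Y2 x) \<le> B"
    using convolution_Young_bound[of F "coef_weight r v" "coef_weight (r + \<beta>) v", OF _ _ _ F]
      summable_on_coef_weight_square[OF assms(2)] summable_on_coef_weight_square[OF \<open>inV r v\<close>]
    unfolding Y2_def B_def sqrt_infsum_coef_weight_square[OF assms(2)]
      sqrt_infsum_coef_weight_square[OF \<open>inV r v\<close>]
    by (simp_all add: F_def coef_weight_nonneg mult_ac)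
  define \<sigma>1 where "\<sigma>1 = (\<lambda>(j :: lattice, l :: lattice). (- (j + l), l))"
  define \<sigma>2 where "\<sigma>2 = (\<lambda>(j :: lattice, l :: lattice). (l, j))"
  have inv: "\<sigma>1 (\<sigma>1 x) = x" "\<sigma>2 (\<sigma>2 x) = x" for x
    by (cases x; simp add: \<sigma>1_def \<sigma>2_def)+
  have "- (l + j) = - (j + l)" for j l :: lattice by (simp add: add.commute)
  then have M: "trilinear_majorant r \<beta> v = (\<lambda>x. Y1 x + Y1 (\<sigma>1 x) + Y2 (\<sigma>2 x))"
    by (simp add: fun_eq_iff trilinear_majorant_def Y1_def Y2_def F_def \<sigma>1_def \<sigma>2_def
        ac_simps del: minus_add_distrib)
  have shifted: "(\<lambda>x. Y1 (\<sigma>1 x)) summable_on UNIV" "(\<lambda>x. Y2 (\<sigma>2 x)) summable_on UNIV"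
    using Y1(1) Y2(1) summable_on_reindex_involution[OF inv(1)]
      summable_on_reindex_involution[OF inv(2)] by blast+
  show "trilinear_majorant r \<beta> v summable_on UNIV"
    unfolding M by (intro summable_on_add Y1(1) shifted)
  have "(\<Sum>\<^sub>\<infinity>x. trilinear_majorant r \<beta> v x) = (\<Sum>\<^sub>\<infinity>x. Y1 x) + (\<Sum>\<^sub>\<infinity>x. Y1 x) + (\<Sum>\<^sub>\<infinity>x. Y2 x)"
    unfolding M
    by (simp add: infsum_add summable_on_add Y1(1) shifted
        infsum_reindex_involution[OF inv(1)] infsum_reindex_involution[OF inv(2)])
  also have "\<dots> \<le> 3 * B" using Y1(2) Y2(2) by simp
  also have "\<dots> \<le> 3 * ((sqrt (\<Sum>\<^sub>\<infinity>k. knorm k powr (- 3 - 2 * \<beta>)) * Vnorm (2 * \<beta>) v)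
      * Vnorm (r + \<beta>) v * Vnorm r v)"
    unfolding B_def using F_sum
    by (intro mult_right_mono mult_left_mono) (simp_all add: Vnorm_nonneg)
  finally show "(\<Sum>\<^sub>\<infinity>x. trilinear_majorant r \<beta> v x)
      \<le> 3 * sqrt (\<Sum>\<^sub>\<infinity>k. knorm k powr (- 3 - 2 * \<beta>))
          * Vnorm (2 * \<beta>) v * Vnorm (r + \<beta>) v * Vnorm r v"
    by (simp add: mult.assoc)
qed

section \<open>The trilinear estimate\<close>

lemma Lam_apply:
  assumes "v 0 = 0"
  shows "Lam s v k = knorm k powr s *\<^sub>R v k"
  using assms by (simp add: Lam_def)

lemma Bpair_summand_symmetrization:
  fixes a r :: real and v :: field
  assumes "is_field v"
  defines "f \<equiv> \<lambda>(j, l). \<i> * kdot (Lam a v j) l * cdot (v l) (Lam (2 * r) v (- (j + l)))"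
  shows "f (j, l) + f (j, - (j + l)) = \<i> * kdot (Lam a v j) l * cdot (v l) (v (- (j + l)))
           * of_real (knorm (- (j + l)) powr (2 * r) - knorm l powr (2 * r))"
proof -
  have "v 0 = 0" and "kdot (v j) j = 0" using assms by (simp_all add: is_field_def)
  then have "kdot (Lam a v j) (- (j + l)) = - kdot (Lam a v j) l"
    by (simp add: Lam_apply kdot_scaleR_left kdot_add_right kdot_minus_right del: minus_add_distrib)
  moreover have "- (j + - (j + l)) = l" by simp
  ultimately show ?thesis
    using \<open>v 0 = 0\<close> unfolding f_def
    by (simp add: Lam_apply cdot_scaleR_right cdot_commute[of "v (- j - l)" "v l"] algebra_simps)
qed

lemma knorm_triad_triangle:
  shows "knorm (- (j + l)) \<le> knorm j + knorm l"
    and "knorm l \<le> knorm j + knorm (- (j + l))"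
    and "knorm j \<le> knorm l + knorm (- (j + l))"
proof -
  have "l = - (j + - (j + l))" and "j = - (l + - (j + l))" by simp_all
  then have "knorm l = knorm (j + - (j + l))" and "knorm j = knorm (l + - (j + l))"
    by (metis knorm_minus)+
  then show "knorm (- (j + l)) \<le> knorm j + knorm l"
    and "knorm l \<le> knorm j + knorm (- (j + l))"
    and "knorm j \<le> knorm l + knorm (- (j + l))"
    using knorm_triangle[of j l] knorm_triangle[of j "- (j + l)"] knorm_triangle[of l "- (j + l)"]
    by (simp_all only: knorm_minus)
qed

lemma norm_symmetrized_summand_le:
  assumes "v 0 = 0"
  shows "norm (\<i> * kdot (Lam a v j) l * cdot (v l) (v m)
            * of_real (knorm m powr (2 * r) - knorm l powr (2 * r)))
    \<le> knorm j powr a * knorm l * \<bar>knorm m powr (2 * r) - knorm l powr (2 * r)\<bar>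
      * (norm (v j) * norm (v l) * norm (v m))"
proof -
  have "norm (kdot (Lam a v j) l) \<le> knorm j powr a * norm (v j) * knorm l"
    using norm_kdot_le[of "Lam a v j" l] assms by (simp add: Lam_apply)
  moreover have "norm (cdot (v l) (v m)) \<le> norm (v l) * norm (v m)"
    by (rule norm_cdot_le)
  ultimately have "norm (\<i> * kdot (Lam a v j) l * cdot (v l) (v m)
            * of_real (knorm m powr (2 * r) - knorm l powr (2 * r)))
      \<le> (knorm j powr a * norm (v j) * knorm l) * (norm (v l) * norm (v m))
        * \<bar>knorm m powr (2 * r) - knorm l powr (2 * r)\<bar>"
    unfolding norm_mult norm_of_real by (auto intro!: mult_mono mult_right_mono simp: knorm_nonneg)
  then show ?thesis by (simp add: ac_simps)
qed

lemma trilinear_majorant_apply: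
  "trilinear_majorant r \<beta> v (j, l)
    = (knorm j powr (\<beta> - 3/2) * knorm l powr (r + \<beta>) * knorm (- (j + l)) powr r
       + knorm (- (j + l)) powr (\<beta> - 3/2) * knorm l powr (r + \<beta>) * knorm j powr r
       + knorm l powr (\<beta> - 3/2) * knorm (- (j + l)) powr (r + \<beta>) * knorm j powr r)
      * (norm (v j) * norm (v l) * norm (v (- (j + l))))"
  by (simp add: trilinear_majorant_def coef_weight_def algebra_simps del: minus_add_distrib)

lemma symmetrized_summand_le_majorant:
  fixes r \<beta> :: real
  assumes "r > 0" "\<beta> > 0" "\<beta> < 5/4"
  obtains K where "K > 0"
    and "\<And>v j l. v 0 = 0 \<Longrightarrow>
      norm (\<i> * kdot (Lam (2 * \<beta> - 5/2) v j) l * cdot (v l) (v (- (j + l)))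
            * of_real (knorm (- (j + l)) powr (2 * r) - knorm l powr (2 * r)))
        \<le> K * trilinear_majorant r \<beta> v (j, l)"
proof -
  obtain K where "K > 0" and kernel: "\<And>x y z. x > 0 \<Longrightarrow> y > 0 \<Longrightarrow> z > 0 \<Longrightarrow> z \<le> x + y \<Longrightarrow>
      y \<le> x + z \<Longrightarrow> x \<le> y + z \<Longrightarrow>
      x powr (2 * \<beta> - 5/2) * y * \<bar>z powr (2 * r) - y powr (2 * r)\<bar>
        \<le> K * (x powr (\<beta> - 3/2) * y powr (r + \<beta>) * z powr r
              + z powr (\<beta> - 3/2) * y powr (r + \<beta>) * x powr r
              + y powr (\<beta> - 3/2) * z powr (r + \<beta>) * x powr r)"
    using commutator_kernel_bound[OF assms] by blast
  show thesis
  proof (rule that[OF \<open>K > 0\<close>])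
    fix v :: field and j l :: lattice
    assume "v 0 = 0"
    define m where "m = - (j + l)"
    define x y z where "x = knorm j" and "y = knorm l" and "z = knorm m"
    define P where "P = norm (v j) * norm (v l) * norm (v m)"
    have "(x powr (2 * \<beta> - 5/2) * y * \<bar>z powr (2 * r) - y powr (2 * r)\<bar>) * P
        \<le> K * (x powr (\<beta> - 3/2) * y powr (r + \<beta>) * z powr r
              + z powr (\<beta> - 3/2) * y powr (r + \<beta>) * x powr r
              + y powr (\<beta> - 3/2) * z powr (r + \<beta>) * x powr r) * P"
    proof (cases "P = 0")
      case False
      then have "j \<noteq> 0" "l \<noteq> 0" "m \<noteq> 0" using \<open>v 0 = 0\<close> by (auto simp: P_def)
      then have "x > 0" "y > 0" "z > 0"
        using knorm_ge_1 by (auto simp: x_def y_def z_def intro: less_le_trans[of 0 1])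
      moreover have "z \<le> x + y" "y \<le> x + z" "x \<le> y + z"
        unfolding x_def y_def z_def m_def by (fact knorm_triad_triangle)+
      ultimately show ?thesis
        using kernel by (intro mult_right_mono) (simp_all add: P_def)
    qed simp
    with norm_symmetrized_summand_le[where v = v and a = "2 * \<beta> - 5/2" and j = j and l = l
        and m = m and r = r, OF \<open>v 0 = 0\<close>]
    show "norm (\<i> * kdot (Lam (2 * \<beta> - 5/2) v j) l * cdot (v l) (v (- (j + l)))
            * of_real (knorm (- (j + l)) powr (2 * r) - knorm l powr (2 * r)))
        \<le> K * trilinear_majorant r \<beta> v (j, l)"
      unfolding trilinear_majorant_apply by (simp add: x_def y_def z_def m_def P_def mult.assoc)
  qed
qed

lemma Bpair_commutator_estimate:
  fixes r \<beta> :: real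
  assumes "r > 0" "\<beta> > 0" "\<beta> < 5/4"
  obtains C where "C > 0"
    and "\<And>v. inV (2 * \<beta>) v \<Longrightarrow> inV (r + \<beta>) v \<Longrightarrow>
      norm (Bpair (Lam (2 * \<beta> - 5/2) v) v (Lam (2 * r) v))
        \<le> C * Vnorm (2 * \<beta>) v * Vnorm (r + \<beta>) v * Vnorm r v"
proof -
  obtain K where "K > 0" and summand_bound: "\<And>v j l. v 0 = 0 \<Longrightarrow>
      norm (\<i> * kdot (Lam (2 * \<beta> - 5/2) v j) l * cdot (v l) (v (- (j + l)))
            * of_real (knorm (- (j + l)) powr (2 * r) - knorm l powr (2 * r)))
        \<le> K * trilinear_majorant r \<beta> v (j, l)"
    using symmetrized_summand_le_majorant[OF assms] by blast
  define Z where "Z = (\<Sum>\<^sub>\<infinity>k. knorm k powr (- 3 - 2 * \<beta>))"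
  define C where "C = (2 * pi) ^ 3 / 2 * K * 3 * sqrt Z"
  have "C \<ge> 0" using \<open>K > 0\<close> by (simp add: C_def Z_def infsum_nonneg)
  show thesis
  proof (rule that[of "C + 1"])
    fix v assume v: "inV (2 * \<beta>) v" "inV (r + \<beta>) v"
    define N where "N = Vnorm (2 * \<beta>) v * Vnorm (r + \<beta>) v * Vnorm r v"
    have "N \<ge> 0" by (simp add: N_def Vnorm_nonneg)
    have "is_field v" "v 0 = 0" using v by (simp_all add: inV_def is_field_def)
    have M: "trilinear_majorant r \<beta> v summable_on UNIV"
      and M_sum: "(\<Sum>\<^sub>\<infinity>x. trilinear_majorant r \<beta> v x) \<le> 3 * sqrt Z * N"
      using summable_on_trilinear_majorant[OF v assms(2)]
        infsum_trilinear_majorant_le[OF v assms(2)]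
      by (simp_all add: Z_def N_def mult.assoc)
    define f where "f = (\<lambda>(j, l).
      \<i> * kdot (Lam (2 * \<beta> - 5/2) v j) l * cdot (v l) (Lam (2 * r) v (- (j + l))))"
    define \<sigma> where "\<sigma> = (\<lambda>(j :: lattice, l :: lattice). (j, - (j + l)))"
    have "\<sigma> (\<sigma> x) = x" for x by (cases x) (simp add: \<sigma>_def)
    moreover have "norm (f x + f (\<sigma> x)) \<le> K * trilinear_majorant r \<beta> v x" for x
      using Bpair_summand_symmetrization[OF \<open>is_field v\<close>, of "2 * \<beta> - 5/2" r]
        summand_bound[of v, OF \<open>v 0 = 0\<close>]
      by (cases x) (simp add: f_def \<sigma>_def)
    ultimately have "2 * norm (\<Sum>\<^sub>\<infinity>x. f x) \<le> (\<Sum>\<^sub>\<infinity>x. K * trilinear_majorant r \<beta> v x)"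
      using summable_on_cmult_right[OF M] by (rule norm_infsum_le_symmetrized)
    also have "\<dots> \<le> K * (3 * sqrt Z * N)"
      using M_sum \<open>K > 0\<close> by (simp add: infsum_cmult_right')
    finally have "norm (Bpair (Lam (2 * \<beta> - 5/2) v) v (Lam (2 * r) v)) \<le> C * N"
      by (simp add: Bpair_def f_def C_def norm_mult norm_power algebra_simps)
    also have "\<dots> \<le> (C + 1) * N" using \<open>N \<ge> 0\<close> by (simp add: mult_right_mono)
    finally show "norm (Bpair (Lam (2 * \<beta> - 5/2) v) v (Lam (2 * r) v))
        \<le> (C + 1) * Vnorm (2 * \<beta>) v * Vnorm (r + \<beta>) v * Vnorm r v"
      by (simp add: N_def mult.assoc)
  qed (use \<open>C \<ge> 0\<close> in simp)
qed

theorem lemma13: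
  fixes \<alpha> \<beta> r :: real
  assumes "1/2 < \<beta>" and "\<beta> < 5/4" and "\<alpha> + \<beta> = 5/4" and "r > 0"
  shows "\<exists>C>0. \<forall>v. inV (2 * \<beta>) v \<and> inV (r + \<beta>) v \<longrightarrow>
           norm (Bpair (Lam (-2 * \<alpha>) v) v (Lam (2 * r) v))
             \<le> C * Vnorm (2 * \<beta>) v * Vnorm (r + \<beta>) v * Vnorm r v"
proof -
  have "-2 * \<alpha> = 2 * \<beta> - 5/2" using assms(3) by simp
  moreover obtain C where "C > 0" and "\<And>v. inV (2 * \<beta>) v \<Longrightarrow> inV (r + \<beta>) v \<Longrightarrow>
      norm (Bpair (Lam (2 * \<beta> - 5/2) v) v (Lam (2 * r) v))
        \<le> C * Vnorm (2 * \<beta>) v * Vnorm (r + \<beta>) v * Vnorm r v"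
    using Bpair_commutator_estimate[of r \<beta>] assms by auto
  ultimately show ?thesis by auto
qed

end
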